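(* Let $p\in(1,\infty)$ and let $G=(X,b,m,0)$ be a weighted graph (potential $c=0$). Let $W\subseteq X$ be such that its interior boundary $\partial_iW$ is finite. If the subgraph $G_W=(W,b|_{W\times W},m|_W,0)$ is $p$-hyperbolic, then $G$ is $p$-hyperbolic.
   Context: Weighted graph $G=(X,b,m,c)$: $X$ countably infinite; $b$ symmetric, nonnegative, zero on the diagonal, $\sum_yb(x,y)<\infty$; $m>0$; $c\ge0$; $x\sim y$ iff $b(x,y)>0$; $X$ connected. $\partial_iW=\{y\in W:y\sim z\text{ for some }z\in X\setminus W\}$. For a graph with vertex set $V$ and weight $b'$ (and potential $0$), $\mathcal{E}_p(f)=\frac12\sum_{x,y\in V}b'(x,y)|f(x)-f(y)|^p$; it is $p$-parabolic if $\inf\{\mathcal{E}_p(\varphi):\varphi\text{ finitely supported on }V,\ \varphi\ge1\text{ on }K\}=0$ for every finite $K\subseteq V$, and $p$-hyperbolic otherwise. *)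

theory Defs
  imports "HOL-Analysis.Analysis"
begin

definition weighted_graph ::
  "'a set \<Rightarrow> ('a \<Rightarrow> 'a \<Rightarrow> real) \<Rightarrow> ('a \<Rightarrow> real) \<Rightarrow> ('a \<Rightarrow> real) \<Rightarrow> bool" where
  "weighted_graph X b m c \<longleftrightarrow>
     countable X \<and> infinite X \<and>
     (\<forall>x y. b x y \<noteq> 0 \<longrightarrow> x \<in> X \<and> y \<in> X) \<and>
     (\<forall>x\<in>X. \<forall>y\<in>X. b x y = b y x \<and> b x y \<ge> 0) \<and>
     (\<forall>x\<in>X. b x x = 0) \<and>
     (\<forall>x\<in>X. (\<lambda>y. b x y) summable_on X) \<and>
     (\<forall>x\<in>X. m x > 0) \<and>
     (\<forall>x\<in>X. c x \<ge> 0) \<and>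
     (\<forall>x\<in>X. \<forall>y\<in>X. (x, y) \<in> {(u, v). u \<in> X \<and> v \<in> X \<and> b u v > 0}\<^sup>*)"

definition interior_boundary :: "'a set \<Rightarrow> ('a \<Rightarrow> 'a \<Rightarrow> real) \<Rightarrow> 'a set \<Rightarrow> 'a set" where
  "interior_boundary X b W = {y \<in> W. \<exists>z \<in> X - W. b y z > 0}"

definition p_energy :: "'a set \<Rightarrow> ('a \<Rightarrow> 'a \<Rightarrow> real) \<Rightarrow> real \<Rightarrow> ('a \<Rightarrow> real) \<Rightarrow> ennreal" where
  "p_energy V b' p f =
     ennreal (1/2) * (\<Sum>\<^sub>\<infinity>(x, y) \<in> V \<times> V. ennreal (b' x y * \<bar>f x - f y\<bar> powr p))"

definition p_parabolic :: "'a set \<Rightarrow> ('a \<Rightarrow> 'a \<Rightarrow> real) \<Rightarrow> real \<Rightarrow> bool" where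
  "p_parabolic V b' p \<longleftrightarrow>
     (\<forall>K. finite K \<and> K \<subseteq> V \<longrightarrow>
        (INF \<phi> \<in> {\<phi>. finite {x \<in> V. \<phi> x \<noteq> 0} \<and> (\<forall>x\<in>K. \<phi> x \<ge> 1)}. p_energy V b' p \<phi>) = 0)"

definition p_hyperbolic :: "'a set \<Rightarrow> ('a \<Rightarrow> 'a \<Rightarrow> real) \<Rightarrow> real \<Rightarrow> bool" where
  "p_hyperbolic V b' p \<longleftrightarrow> \<not> p_parabolic V b' p"

definition restrict_weight :: "('a \<Rightarrow> 'a \<Rightarrow> real) \<Rightarrow> 'a set \<Rightarrow> 'a \<Rightarrow> 'a \<Rightarrow> real" where
  "restrict_weight b W = (\<lambda>x y. if x \<in> W \<and> y \<in> W then b x y else 0)"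

end

theory Submission
  imports Defs
begin

text \<open>Restricting a test function for \<open>G\<close> to \<open>W\<close> gives a test function for \<open>G\<^sub>W\<close>
  whose energy in \<open>G\<^sub>W\<close> only drops the edges leaving \<open>W \<times> W\<close>. So parabolicity passes from
  \<open>G\<close> to \<open>G\<^sub>W\<close>, and hyperbolicity from \<open>G\<^sub>W\<close> to \<open>G\<close>.\<close>

lemma p_energy_restrict_weight_le:
  assumes "W \<subseteq> X"
  shows "p_energy W (restrict_weight b W) p f \<le> p_energy X b p f"
proof -
  let ?e = "\<lambda>(x, y). ennreal (b x y * \<bar>f x - f y\<bar> powr p)"
  have restrict: "(\<Sum>\<^sub>\<infinity>(x, y) \<in> W \<times> W. ennreal (restrict_weight b W x y * \<bar>f x - f y\<bar> powr p))
      = (\<Sum>\<^sub>\<infinity>z \<in> W \<times> W. ?e z)"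
    by (rule infsum_cong) (auto simp: restrict_weight_def)
  have "(\<Sum>\<^sub>\<infinity>z \<in> W \<times> W. ?e z) \<le> (\<Sum>\<^sub>\<infinity>z \<in> X \<times> X. ?e z)"
    by (rule infsum_mono_neutral) (use assms in \<open>auto intro: nonneg_summable_on_complete\<close>)
  then show ?thesis
    unfolding p_energy_def restrict by (intro mult_left_mono) auto
qed

lemma p_parabolic_mono:
  assumes "V \<subseteq> X"
    and energy_le: "\<And>f. p_energy V b' p f \<le> p_energy X b p f"
    and "p_parabolic X b p"
  shows "p_parabolic V b' p"
  unfolding p_parabolic_def
proof (intro allI impI)
  fix K assume K: "finite K \<and> K \<subseteq> V"
  let ?tests = "\<lambda>S. {\<phi>. finite {x \<in> S. \<phi> x \<noteq> 0} \<and> (\<forall>x\<in>K. \<phi> x \<ge> 1)}"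
  have tests_sub: "?tests X \<subseteq> ?tests V"
    using \<open>V \<subseteq> X\<close> by (auto elim: rev_finite_subset)
  have "(INF \<phi> \<in> ?tests V. p_energy V b' p \<phi>) \<le> (INF \<phi> \<in> ?tests X. p_energy V b' p \<phi>)"
    using tests_sub by (rule INF_superset_mono) simp
  also have "\<dots> \<le> (INF \<phi> \<in> ?tests X. p_energy X b p \<phi>)"
    by (rule INF_mono) (use energy_le in blast)
  also have "\<dots> = 0"
    using \<open>p_parabolic X b p\<close> K \<open>V \<subseteq> X\<close> unfolding p_parabolic_def by blast
  finally show "(INF \<phi> \<in> ?tests V. p_energy V b' p \<phi>) = 0"
    by simp
qed

lemma p_hyperbolic_of_subgraph:
  assumes "W \<subseteq> X" and "p_hyperbolic W (restrict_weight b W) p"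
  shows "p_hyperbolic X b p"
  using assms p_parabolic_mono[OF \<open>W \<subseteq> X\<close> p_energy_restrict_weight_le[OF \<open>W \<subseteq> X\<close>]]
  unfolding p_hyperbolic_def by blast

theorem proposition4p7:
  fixes X W :: "'a set" and b :: "'a \<Rightarrow> 'a \<Rightarrow> real" and m :: "'a \<Rightarrow> real" and p :: real
  assumes "1 < p"
    and "weighted_graph X b m (\<lambda>_. 0)"
    and "W \<subseteq> X"
    and "finite (interior_boundary X b W)"
    and "p_hyperbolic W (restrict_weight b W) p"
  shows "p_hyperbolic X b p"
  using assms(3,5) by (rule p_hyperbolic_of_subgraph)

end
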